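(* Let $\Lambda$ be a row-finite $k$-graph with no sources and let $v\in\Lambda^0$. If $y$ belongs to the saturation of the set $\{x\in\Lambda^0: v\le x\}$, then there exists $z\in\Lambda^0$ such that $v\le z$ and $y\le z$.
   Context: A $k$-graph is a countable category $\Lambda$ with a functor $d:\Lambda\to\mathbb{N}^k$ satisfying the factorization property: whenever $d(\lambda)=m+n$ there are unique $\mu,\nu$ with $\lambda=\mu\nu$, $d(\mu)=m$, $d(\nu)=n$. $\Lambda^n=d^{-1}(n)$, $\Lambda^0$ is the set of vertices, $r,s$ are range and source; $v\Lambda^n=\{\lambda: r(\lambda)=v,d(\lambda)=n\}$, $v\Lambda w=\{\lambda:r(\lambda)=v,s(\lambda)=w\}$. Row-finite: each $v\Lambda^n$ finite; no sources: $v\Lambda^{e_i}\ne\emptyset$ for all $v$, $i$ ($e_1,\dots,e_k$ the standard generators of $\mathbb{N}^k$). For vertices, $v\le w$ means $v\Lambda w\neq\emptyset$. A set $H\subseteq\Lambda^0$ is saturated if for every $v\in\Lambda^0$: if $r^{-1}(v)\neq\emptyset$ and $\{s(\lambda):\lambda\in v\Lambda^{e_i}\}\subseteq H$ for some $i\in\{1,\dots,k\}$ then $v\in H$. The saturation of a set is the smallest saturated subset of $\Lambda^0$ containing it. *)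

theory Defs
  imports Main "HOL-Library.Countable_Set"
begin

text \<open>A k-graph is presented as a small category with vertex set V (objects),
morphism set L, range r, source s, composition cmp (cmp l m = l m, defined when
s l = r m), identities ident, and a degree functor d into N^k, where N^k is
represented as 'k \<Rightarrow> nat for a finite index type 'k (so k = CARD('k)).\<close>

definition kgraph ::
  "'v set \<Rightarrow> 'm set \<Rightarrow> ('m \<Rightarrow> 'v) \<Rightarrow> ('m \<Rightarrow> 'v) \<Rightarrow> ('m \<Rightarrow> 'm \<Rightarrow> 'm) \<Rightarrow> ('v \<Rightarrow> 'm)
   \<Rightarrow> ('m \<Rightarrow> ('k::finite \<Rightarrow> nat)) \<Rightarrow> bool" where
  "kgraph V L r s cmp ident d \<longleftrightarrow>
     countable L \<and>
     (\<forall>l\<in>L. r l \<in> V \<and> s l \<in> V) \<and>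
     (\<forall>v\<in>V. ident v \<in> L \<and> r (ident v) = v \<and> s (ident v) = v) \<and>
     (\<forall>l\<in>L. \<forall>m\<in>L. s l = r m \<longrightarrow>
        cmp l m \<in> L \<and> r (cmp l m) = r l \<and> s (cmp l m) = s m) \<and>
     (\<forall>l\<in>L. \<forall>m\<in>L. \<forall>n\<in>L. s l = r m \<and> s m = r n \<longrightarrow>
        cmp (cmp l m) n = cmp l (cmp m n)) \<and>
     (\<forall>l\<in>L. cmp (ident (r l)) l = l \<and> cmp l (ident (s l)) = l) \<and>
     (\<forall>v\<in>V. d (ident v) = (\<lambda>i. 0)) \<and>
     (\<forall>l\<in>L. \<forall>m\<in>L. s l = r m \<longrightarrow> d (cmp l m) = (\<lambda>i. d l i + d m i)) \<and>
     (\<forall>l\<in>L. \<forall>p q. d l = (\<lambda>i. p i + q i) \<longrightarrow>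
        (\<exists>!(a, b). a \<in> L \<and> b \<in> L \<and> s a = r b \<and> l = cmp a b \<and> d a = p \<and> d b = q))"

definition unitdeg :: "'k \<Rightarrow> ('k \<Rightarrow> nat)" where
  "unitdeg i = (\<lambda>j. if j = i then 1 else 0)"

definition row_finite :: "'v set \<Rightarrow> 'm set \<Rightarrow> ('m \<Rightarrow> 'v) \<Rightarrow> ('m \<Rightarrow> 'k \<Rightarrow> nat) \<Rightarrow> bool" where
  "row_finite V L r d \<longleftrightarrow> (\<forall>v\<in>V. \<forall>n. finite {l\<in>L. r l = v \<and> d l = n})"

definition no_sources :: "'v set \<Rightarrow> 'm set \<Rightarrow> ('m \<Rightarrow> 'v) \<Rightarrow> ('m \<Rightarrow> 'k \<Rightarrow> nat) \<Rightarrow> bool" where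
  "no_sources V L r d \<longleftrightarrow> (\<forall>v\<in>V. \<forall>i. {l\<in>L. r l = v \<and> d l = unitdeg i} \<noteq> {})"

definition vle :: "'m set \<Rightarrow> ('m \<Rightarrow> 'v) \<Rightarrow> ('m \<Rightarrow> 'v) \<Rightarrow> 'v \<Rightarrow> 'v \<Rightarrow> bool" where
  "vle L r s v w \<longleftrightarrow> (\<exists>l\<in>L. r l = v \<and> s l = w)"

definition saturated ::
  "'v set \<Rightarrow> 'm set \<Rightarrow> ('m \<Rightarrow> 'v) \<Rightarrow> ('m \<Rightarrow> 'v) \<Rightarrow> ('m \<Rightarrow> 'k \<Rightarrow> nat) \<Rightarrow> 'v set \<Rightarrow> bool" where
  "saturated V L r s d H \<longleftrightarrow>
     (\<forall>v\<in>V. ((\<exists>l\<in>L. r l = v) \<and>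
              (\<exists>i. {s l | l. l \<in> L \<and> r l = v \<and> d l = unitdeg i} \<subseteq> H)) \<longrightarrow> v \<in> H)"

definition saturation ::
  "'v set \<Rightarrow> 'm set \<Rightarrow> ('m \<Rightarrow> 'v) \<Rightarrow> ('m \<Rightarrow> 'v) \<Rightarrow> ('m \<Rightarrow> 'k \<Rightarrow> nat) \<Rightarrow> 'v set \<Rightarrow> 'v set" where
  "saturation V L r s d X = \<Inter>{H. H \<subseteq> V \<and> X \<subseteq> H \<and> saturated V L r s d H}"

end

theory Submission
  imports Defs
begin

text \<open>The set of vertices that can reach some vertex of a fixed set Z is saturated: if every
edge of degree e_i out of w ends in such a vertex, then, since there are no sources, one such
edge exists and composing it with a path into Z shows that w reaches Z as well. Taking for Z
the vertices above v, this set contains all vertices above v, so it contains their saturation.\<close>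

lemma kgraph_ident:
  assumes "kgraph V L r s cmp ident d" and "x \<in> V"
  shows "ident x \<in> L \<and> r (ident x) = x \<and> s (ident x) = x"
  using assms unfolding kgraph_def by (elim conjE) blast

lemma kgraph_cmp:
  assumes "kgraph V L r s cmp ident d" and "l \<in> L" and "m \<in> L" and "s l = r m"
  shows "cmp l m \<in> L \<and> r (cmp l m) = r l \<and> s (cmp l m) = s m"
  using assms unfolding kgraph_def by (elim conjE) blast

lemma kgraph_vle_refl:
  assumes "kgraph V L r s cmp ident d" and "x \<in> V"
  shows "vle L r s x x"
  using kgraph_ident[OF assms] unfolding vle_def by blast

lemma kgraph_vle_trans:
  assumes "kgraph V L r s cmp ident d" and "vle L r s u w" and "vle L r s w z"
  shows "vle L r s u z"
proof -
  obtain l m where l: "l \<in> L" "r l = u" "s l = w" and m: "m \<in> L" "r m = w" "s m = z"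
    using assms(2,3) unfolding vle_def by blast
  then have "s l = r m" by simp
  then have "cmp l m \<in> L \<and> r (cmp l m) = u \<and> s (cmp l m) = z"
    using kgraph_cmp[OF assms(1) \<open>l \<in> L\<close> \<open>m \<in> L\<close>] l m by simp
  then show ?thesis unfolding vle_def by blast
qed

lemma saturation_least:
  assumes "H \<subseteq> V" and "X \<subseteq> H" and "saturated V L r s d H"
  shows "saturation V L r s d X \<subseteq> H"
  using assms unfolding saturation_def by blast

lemma saturated_reaching:
  assumes kg: "kgraph V L r s cmp ident d" and ns: "no_sources V L r d"
  shows "saturated V L r s d {x\<in>V. \<exists>z\<in>Z. vle L r s x z}"
  unfolding saturated_def
proof (intro ballI impI)
  fix w assume "w \<in> V"
    and "(\<exists>l\<in>L. r l = w) \<and>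
         (\<exists>i. {s l | l. l \<in> L \<and> r l = w \<and> d l = unitdeg i} \<subseteq> {x\<in>V. \<exists>z\<in>Z. vle L r s x z})"
  then obtain i where
    out: "{s l | l. l \<in> L \<and> r l = w \<and> d l = unitdeg i} \<subseteq> {x\<in>V. \<exists>z\<in>Z. vle L r s x z}"
    by blast
  obtain l where l: "l \<in> L" "r l = w" "d l = unitdeg i"
    using ns \<open>w \<in> V\<close> unfolding no_sources_def by blast
  then obtain z where "z \<in> Z" and lz: "vle L r s (s l) z"
    using out by blast
  have "vle L r s w (s l)"
    using l unfolding vle_def by blast
  then have "vle L r s w z"
    using kgraph_vle_trans[OF kg _ lz] by blast
  then show "w \<in> {x\<in>V. \<exists>z\<in>Z. vle L r s x z}"
    using \<open>z \<in> Z\<close> \<open>w \<in> V\<close> by blast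
qed

theorem lemma2p14:
  fixes V :: "'v set" and L :: "'m set" and r s :: "'m \<Rightarrow> 'v"
    and cmp :: "'m \<Rightarrow> 'm \<Rightarrow> 'm" and ident :: "'v \<Rightarrow> 'm"
    and d :: "'m \<Rightarrow> ('k::finite \<Rightarrow> nat)" and v y :: 'v
  assumes "kgraph V L r s cmp ident d"
    and "row_finite V L r d"
    and "no_sources V L r d"
    and "v \<in> V"
    and "y \<in> saturation V L r s d {x\<in>V. vle L r s v x}"
  shows "\<exists>z\<in>V. vle L r s v z \<and> vle L r s y z"
proof -
  let ?Z = "{z\<in>V. vle L r s v z}"
  let ?H = "{x\<in>V. \<exists>z\<in>?Z. vle L r s x z}"
  have "?Z \<subseteq> ?H"
    using kgraph_vle_refl[OF assms(1)] by blast
  then have "saturation V L r s d ?Z \<subseteq> ?H"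
    using saturation_least[OF _ _ saturated_reaching[OF assms(1,3)]] by blast
  then show ?thesis
    using assms(5) by blast
qed

end
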